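(* Consider the symmetrical BSPR network ($p_{s,i}=p_s$, $p_{i,d}=p_d$ for all $i$, $0\le p_s,p_d<1/2$), let $p=p_s(1-p_d)+(1-p_s)p_d$ and $q=1-p$. For any $\zeta>0$, let $K(p,\zeta)$ be the smallest positive integer $k$ satisfying \[ 1+kp\log p+kq\log q-\sum_{l=0}^{k-1}\binom{k-1}{l}\left(q^lp^{k-l}+q^{k-l}p^l\right)\log\left(q^lp^{k-l}+q^{k-l}p^l\right)\ge 1-\zeta . \] If the number of relays satisfies $K>K(p,\zeta)$, then coded transmission with forwarding relays achieves rates within $\zeta$ bits of the capacity.
   Context: Logarithms are base 2, with $0\log0=0$. BSPR network with $K$ relays: at each network use $t$ the source sends $U[t]\in\{0,1\}$; relay $i$ receives $V_i[t]=U[t]\oplus Z_i[t]$, $\Pr\{Z_i=1\}=p_{s,i}$; relay $i$ sends $X_i[t]$ and the destination receives $Y_i[t]=X_i[t]\oplus E_i[t]$, $\Pr\{E_i=1\}=p_{i,d}$; all noises mutually independent and i.i.d. over time. An $(M,n)$ code: message $W$ uniform on $\{0,\dots,M-1\}$, source encoder on $W$, relay encoders $X_i[t]=f_{i,t}(V_i[1],\dots,V_i[t-1])$, destination decoder on all $Y_i$; rate $(\log_2M)/n$; average error probability $P_e$. $R$ is achievable if for every $\epsilon>0$ and all sufficiently large $n$ there is a $(2^{nR},n)$ code with $P_e\le\epsilon$; the capacity $C$ is the supremum of achievable rates. A forwarding relay sets $X_i[t]=V_i[t-1]$ ($X_i[1]=0$). Coded transmission with forwarding relays: all relays forward and the source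 uses a channel code for the effective point-to-point channel from $U$ to $(Y_1,\dots,Y_K)$, the destination decoding from $(Y_1,\dots,Y_K)$; "achieves rates within $\zeta$ bits of the capacity" means every rate below some $R\ge C-\zeta$ is achievable by this scheme. *)

theory Defs
  imports Complex_Main
begin

definition xlog :: "real \<Rightarrow> real" where
  "xlog x = (if x = 0 then 0 else x * log 2 x)"

text \<open>BSPR network with K relays (0..K-1), time steps 0..n-1 (the paper's 1..n).
  ps i = Pr{Z_i = 1}, pd i = Pr{E_i = 1}.  A noise realization is the set of
  (relay, time) positions where the noise bit is 1.\<close>

definition grid :: "nat \<Rightarrow> nat \<Rightarrow> (nat \<times> nat) set" where
  "grid K n = {..<K} \<times> {..<n}"

definition noise_weight :: "(nat \<Rightarrow> real) \<Rightarrow> nat \<Rightarrow> nat \<Rightarrow> (nat \<times> nat) set \<Rightarrow> real" where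
  "noise_weight p K n S = (\<Prod>(i,t)\<in>grid K n. if (i,t) \<in> S then p i else 1 - p i)"

text \<open>Code components: source encoder enc w t = U[t] for message w;
  relay encoder f i t (V_i[0],...,V_i[t-1]) = X_i[t] (causal by construction);
  decoder dec applied to the received array Y (Y i t for i<K, t<n; False elsewhere).\<close>

definition relay_in :: "(nat \<Rightarrow> nat \<Rightarrow> bool) \<Rightarrow> nat \<Rightarrow> (nat \<times> nat) set \<Rightarrow> nat \<Rightarrow> nat \<Rightarrow> bool" where
  "relay_in enc w Zs i t = (enc w t \<noteq> ((i,t) \<in> Zs))"

definition received ::
  "nat \<Rightarrow> nat \<Rightarrow> (nat \<Rightarrow> nat \<Rightarrow> bool) \<Rightarrow> (nat \<Rightarrow> nat \<Rightarrow> bool list \<Rightarrow> bool)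
   \<Rightarrow> nat \<Rightarrow> (nat \<times> nat) set \<Rightarrow> (nat \<times> nat) set \<Rightarrow> nat \<Rightarrow> nat \<Rightarrow> bool" where
  "received K n enc f w Zs Es i t =
     (if i < K \<and> t < n
      then (f i t (map (relay_in enc w Zs i) [0..<t]) \<noteq> ((i,t) \<in> Es))
      else False)"

definition avg_error ::
  "nat \<Rightarrow> (nat \<Rightarrow> real) \<Rightarrow> (nat \<Rightarrow> real) \<Rightarrow> nat \<Rightarrow> nat \<Rightarrow> (nat \<Rightarrow> nat \<Rightarrow> bool)
   \<Rightarrow> (nat \<Rightarrow> nat \<Rightarrow> bool list \<Rightarrow> bool) \<Rightarrow> ((nat \<Rightarrow> nat \<Rightarrow> bool) \<Rightarrow> nat) \<Rightarrow> real" where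
  "avg_error K ps pd n M enc f dec =
     (1 / real M) * (\<Sum>w<M. \<Sum>Zs\<in>Pow (grid K n). \<Sum>Es\<in>Pow (grid K n).
        noise_weight ps K n Zs * noise_weight pd K n Es *
        (if dec (received K n enc f w Zs Es) \<noteq> w then 1 else 0))"

definition num_msgs :: "nat \<Rightarrow> real \<Rightarrow> nat" where
  "num_msgs n R = nat \<lceil>2 powr (real n * R)\<rceil>"

definition achievable :: "nat \<Rightarrow> (nat \<Rightarrow> real) \<Rightarrow> (nat \<Rightarrow> real) \<Rightarrow> real \<Rightarrow> bool" where
  "achievable K ps pd R \<longleftrightarrow>
     (\<forall>\<epsilon>>0. \<exists>N. \<forall>n\<ge>N. \<exists>enc f dec. avg_error K ps pd n (num_msgs n R) enc f dec \<le> \<epsilon>)"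

definition capacity :: "nat \<Rightarrow> (nat \<Rightarrow> real) \<Rightarrow> (nat \<Rightarrow> real) \<Rightarrow> real" where
  "capacity K ps pd = Sup {R. achievable K ps pd R}"

definition fwd_relays :: "nat \<Rightarrow> nat \<Rightarrow> bool list \<Rightarrow> bool" where
  "fwd_relays i t vs = (if t = 0 then False else last vs)"

definition fwd_achievable :: "nat \<Rightarrow> (nat \<Rightarrow> real) \<Rightarrow> (nat \<Rightarrow> real) \<Rightarrow> real \<Rightarrow> bool" where
  "fwd_achievable K ps pd R \<longleftrightarrow>
     (\<forall>\<epsilon>>0. \<exists>N. \<forall>n\<ge>N. \<exists>enc dec.
        avg_error K ps pd n (num_msgs n R) enc fwd_relays dec \<le> \<epsilon>)"

definition fwd_info :: "real \<Rightarrow> nat \<Rightarrow> real" where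
  "fwd_info p k = (let q = 1 - p in
     1 + real k * xlog p + real k * xlog q
     - (\<Sum>l = 0..k-1. real ((k-1) choose l) *
          xlog (q ^ l * p ^ (k-l) + q ^ (k-l) * p ^ l)))"

definition K_thr :: "real \<Rightarrow> real \<Rightarrow> nat" where
  "K_thr p \<zeta> = (LEAST k. 0 < k \<and> fwd_info p k \<ge> 1 - \<zeta>)"

end

theory Submission
  imports Defs
begin

text \<open>With forwarding relays, relay \<open>i\<close> delivers the source bit \<open>U[t]\<close> to the destination at time
  \<open>t + 1\<close> through two cascaded binary symmetric channels, so the destination observes \<open>K\<close>
  independent noisy copies of every source bit: a repetition channel with crossover \<open>p\<close>. Its
  mutual information for uniform input is \<open>fwd_info p K\<close>, and a Bhattacharyya estimate shows it
  tends to \<open>1\<close>; so for \<open>k = K_thr p \<zeta>\<close> it is at least \<open>1 - \<zeta>\<close>. Random coding over the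
  first \<open>k\<close> relays with a likelihood-ratio threshold decoder (a Chernoff bound for the true
  codeword, Markov's inequality for the wrong ones) achieves every rate below it. Conversely, the
  source emits one bit per channel use, so at most \<open>2 ^ n\<close> messages can be told apart and the
  capacity is at most \<open>1\<close>.\<close>

section \<open>Product Bernoulli weights\<close>

definition bernoulli_weight :: "real \<Rightarrow> 'a set \<Rightarrow> 'a set \<Rightarrow> real" where
  "bernoulli_weight a A S = (\<Prod>x\<in>A. if x \<in> S then a else 1 - a)"

lemma bernoulli_weight_nonneg: "0 \<le> a \<Longrightarrow> a \<le> 1 \<Longrightarrow> 0 \<le> bernoulli_weight a A S"
  unfolding bernoulli_weight_def by (intro prod_nonneg) auto

lemma bernoulli_weight_card:
  assumes "finite A" "S \<subseteq> A"
  shows "bernoulli_weight a A S = a ^ card S * (1 - a) ^ (card A - card S)"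
proof -
  have "bernoulli_weight a A S = (\<Prod>x\<in>A \<inter> {x. x \<in> S}. a) * (\<Prod>x\<in>A \<inter> - {x. x \<in> S}. 1 - a)"
    unfolding bernoulli_weight_def by (rule prod.If_cases[OF assms(1)])
  also have "A \<inter> {x. x \<in> S} = S" using assms(2) by auto
  also have "A \<inter> - {x. x \<in> S} = A - S" by auto
  finally show ?thesis using assms by (simp add: card_Diff_subset finite_subset)
qed

lemma bernoulli_weight_Un:
  assumes "finite A" "finite B" "A \<inter> B = {}" "S \<subseteq> A" "T \<subseteq> B"
  shows "bernoulli_weight a (A \<union> B) (S \<union> T) = bernoulli_weight a A S * bernoulli_weight a B T"
proof -
  have "bernoulli_weight a (A \<union> B) (S \<union> T)
      = (\<Prod>x\<in>A. if x \<in> S \<union> T then a else 1 - a) * (\<Prod>x\<in>B. if x \<in> S \<union> T then a else 1 - a)"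
    unfolding bernoulli_weight_def using assms by (simp add: prod.union_disjoint)
  also have "(\<Prod>x\<in>A. if x \<in> S \<union> T then a else 1 - a) = bernoulli_weight a A S"
    unfolding bernoulli_weight_def using assms by (intro prod.cong) auto
  also have "(\<Prod>x\<in>B. if x \<in> S \<union> T then a else 1 - a) = bernoulli_weight a B T"
    unfolding bernoulli_weight_def using assms by (intro prod.cong) auto
  finally show ?thesis .
qed

lemma bernoulli_weight_insert:
  "finite A \<Longrightarrow> x \<notin> A \<Longrightarrow>
     bernoulli_weight e (insert x A) S = (if x \<in> S then e else 1 - e) * bernoulli_weight e A S"
  unfolding bernoulli_weight_def by simp

lemma bernoulli_weight_insert_outside: "x \<notin> A \<Longrightarrow> bernoulli_weight e A (insert x S) = bernoulli_weight e A S"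
  unfolding bernoulli_weight_def by (intro prod.cong) auto

lemma bernoulli_weight_image:
  "inj g \<Longrightarrow> bernoulli_weight a (g ` A) (g ` S) = bernoulli_weight a A S"
  unfolding bernoulli_weight_def by (subst prod.reindex) (auto simp: inj_on_def inj_image_mem_iff)

lemma sum_Pow_Un_disjoint:
  assumes "finite A" "finite B" "A \<inter> B = {}"
  shows "(\<Sum>S\<in>Pow (A \<union> B). f S) = (\<Sum>S\<in>Pow A. \<Sum>T\<in>Pow B. f (S \<union> T))"
proof -
  have "bij_betw (\<lambda>(S, T). S \<union> T) (Pow A \<times> Pow B) (Pow (A \<union> B))"
    by (rule bij_betw_byWitness[where f' = "\<lambda>U. (U \<inter> A, U \<inter> B)"]) (use assms(3) in auto)
  then have "(\<Sum>S\<in>Pow (A \<union> B). f S) = (\<Sum>(S, T)\<in>Pow A \<times> Pow B. f (S \<union> T))"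
    by (simp add: sum.reindex_bij_betw[symmetric] case_prod_beta')
  then show ?thesis by (simp add: sum.cartesian_product)
qed

lemma sum_Pow_singleton: "(\<Sum>S\<in>Pow {x}. f S) = f {} + f {x}"
proof -
  have "Pow {x} = {{}, {x}}" by auto
  then show ?thesis by simp
qed

lemma sum_Pow_image:
  assumes "inj g"
  shows "(\<Sum>T\<in>Pow (g ` A). f T) = (\<Sum>S\<in>Pow A. f (g ` S))"
proof -
  have "Pow (g ` A) = (\<lambda>S. g ` S) ` Pow A" by (auto simp: subset_image_iff)
  moreover have "inj_on (\<lambda>S. g ` S) (Pow A)"
    using assms by (auto simp: inj_on_def inj_image_eq_iff)
  ultimately show ?thesis by (simp add: sum.reindex)
qed

lemma sum_Pow_prod_mem:
  fixes f :: "'a \<Rightarrow> bool \<Rightarrow> 'b :: comm_semiring_1"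
  assumes "finite A"
  shows "(\<Sum>S\<in>Pow A. \<Prod>x\<in>A. f x (x \<in> S)) = (\<Prod>x\<in>A. f x True + f x False)"
proof -
  have "(\<Prod>x\<in>A. f x (x \<in> S)) = (\<Prod>x\<in>S. f x True) * (\<Prod>x\<in>A - S. f x False)" if "S \<subseteq> A" for S
  proof -
    have "(\<Prod>x\<in>A. f x (x \<in> S)) = (\<Prod>x\<in>A. if x \<in> S then f x True else f x False)"
      by (intro prod.cong) auto
    also have "\<dots> = (\<Prod>x\<in>A \<inter> {x. x \<in> S}. f x True) * (\<Prod>x\<in>A \<inter> - {x. x \<in> S}. f x False)"
      by (rule prod.If_cases[OF assms])
    also have "A \<inter> {x. x \<in> S} = S" using that by auto
    also have "A \<inter> - {x. x \<in> S} = A - S" by auto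
    finally show ?thesis .
  qed
  then show ?thesis by (simp add: prod_add[OF assms])
qed

lemma sum_bernoulli_weight: "finite A \<Longrightarrow> (\<Sum>S\<in>Pow A. bernoulli_weight a A S) = 1"
  using sum_Pow_prod_mem[of A "\<lambda>_ b. if b then a else 1 - a"] unfolding bernoulli_weight_def by simp

lemma sum_Pow_card:
  assumes "finite A"
  shows "(\<Sum>S\<in>Pow A. f (card S)) = (\<Sum>d\<le>card A. of_nat (card A choose d) * (f d :: real))"
proof -
  have "Pow A = (\<Union>d\<le>card A. {S. S \<subseteq> A \<and> card S = d})"
    using assms by (auto intro: card_mono)
  then have "(\<Sum>S\<in>Pow A. f (card S)) = (\<Sum>d\<le>card A. \<Sum>S\<in>{S. S \<subseteq> A \<and> card S = d}. f (card S))"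
    using assms by (simp, subst sum.UNION_disjoint) auto
  also have "\<dots> = (\<Sum>d\<le>card A. of_nat (card A choose d) * f d)"
    using assms by (intro sum.cong[OF refl]) (simp add: n_subsets)
  finally show ?thesis .
qed

text \<open>Crossover probability of two cascaded binary symmetric channels; the paper's \<open>p\<close> is
  \<open>bsc_cascade p\<^sub>s p\<^sub>d\<close>.\<close>

definition bsc_cascade :: "real \<Rightarrow> real \<Rightarrow> real" where
  "bsc_cascade a b = a * (1 - b) + (1 - a) * b"

lemma bsc_cascade_bounds:
  assumes "0 \<le> a" "a < 1/2" "0 \<le> b" "b < 1/2"
  shows "0 \<le> bsc_cascade a b" "bsc_cascade a b < 1/2"
proof -
  show "0 \<le> bsc_cascade a b" unfolding bsc_cascade_def using assms by simp
  have "1 - 2 * bsc_cascade a b = (1 - 2 * a) * (1 - 2 * b)"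
    unfolding bsc_cascade_def by (simp add: algebra_simps)
  moreover have "0 < (1 - 2 * a) * (1 - 2 * b)" using assms by simp
  ultimately show "bsc_cascade a b < 1/2" by simp
qed

lemma sum_bernoulli_weight_sym_diff:
  assumes "finite A"
  shows "(\<Sum>S\<in>Pow A. \<Sum>T\<in>Pow A. bernoulli_weight a A S * bernoulli_weight b A T * F (sym_diff S T))
       = (\<Sum>N\<in>Pow A. bernoulli_weight (bsc_cascade a b) A N * F N)"
  using assms
proof (induction A arbitrary: F rule: finite_induct)
  case empty
  then show ?case by (simp add: bernoulli_weight_def)
next
  case (insert x A)
  define c where "c = bsc_cascade a b"
  define G where "G N = (1 - c) * F N + c * F (N \<union> {x})" for N
  have split: "insert x A = A \<union> {x}" "A \<inter> {x} = {}" using insert by auto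
  have sum_split: "(\<Sum>S\<in>Pow (insert x A). f S) = (\<Sum>S\<in>Pow A. \<Sum>U\<in>Pow {x}. f (S \<union> U))"
    for f :: "_ \<Rightarrow> real"
    unfolding split(1) by (rule sum_Pow_Un_disjoint[OF insert(1) _ split(2)]) simp
  have weight_split: "bernoulli_weight e (insert x A) S = (1 - e) * bernoulli_weight e A S"
    "bernoulli_weight e (insert x A) (insert x S) = e * bernoulli_weight e A S" if "S \<subseteq> A" for e S
    using that insert(1,2) by (auto simp: bernoulli_weight_insert bernoulli_weight_insert_outside)
  have cell: "(\<Sum>U\<in>Pow {x}. \<Sum>V\<in>Pow {x}. bernoulli_weight a (insert x A) (S \<union> U)
          * bernoulli_weight b (insert x A) (T \<union> V) * F (sym_diff (S \<union> U) (T \<union> V)))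
      = bernoulli_weight a A S * bernoulli_weight b A T * G (sym_diff S T)" if "S \<subseteq> A" "T \<subseteq> A" for S T
  proof -
    have "x \<notin> S" "x \<notin> T" using that insert(2) by auto
    then have "sym_diff (insert x S) (insert x T) = sym_diff S T"
      "sym_diff (insert x S) T = insert x (sym_diff S T)" "sym_diff S (insert x T) = insert x (sym_diff S T)"
      "sym_diff S T \<union> {x} = insert x (sym_diff S T)"
      by auto
    then show ?thesis
      by (simp only: sum_Pow_singleton Un_empty_right Un_insert_right weight_split[OF that(1)]
          weight_split[OF that(2)] G_def c_def bsc_cascade_def) (simp add: algebra_simps)
  qed
  have "(\<Sum>S\<in>Pow (insert x A). \<Sum>T\<in>Pow (insert x A).
          bernoulli_weight a (insert x A) S * bernoulli_weight b (insert x A) T * F (sym_diff S T))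
      = (\<Sum>S\<in>Pow A. \<Sum>T\<in>Pow A. \<Sum>U\<in>Pow {x}. \<Sum>V\<in>Pow {x}. bernoulli_weight a (insert x A) (S \<union> U)
          * bernoulli_weight b (insert x A) (T \<union> V) * F (sym_diff (S \<union> U) (T \<union> V)))"
    unfolding sum_split by (intro sum.cong[OF refl] sum.swap)
  also have "\<dots> = (\<Sum>S\<in>Pow A. \<Sum>T\<in>Pow A. bernoulli_weight a A S * bernoulli_weight b A T * G (sym_diff S T))"
    by (intro sum.cong[OF refl] cell) auto
  also have "\<dots> = (\<Sum>N\<in>Pow A. bernoulli_weight c A N * G N)"
    unfolding c_def by (rule insert.IH)
  also have "\<dots> = (\<Sum>N\<in>Pow (insert x A). bernoulli_weight c (insert x A) N * F N)"
    unfolding sum_split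
    by (intro sum.cong[OF refl])
      (simp only: sum_Pow_singleton Un_empty_right Un_insert_right weight_split G_def PowD; simp add: algebra_simps)
  finally show ?case unfolding c_def .
qed

lemma sum_bernoulli_weight_prod_blocks:
  fixes m :: nat
  assumes "finite A" "finite B"
    and "\<And>t. t < m \<Longrightarrow> X t \<subseteq> A" "\<And>t. t < m \<Longrightarrow> Y t \<subseteq> B"
    and "\<And>t t'. t < m \<Longrightarrow> t' < m \<Longrightarrow> t \<noteq> t' \<Longrightarrow> X t \<inter> X t' = {}"
    and "\<And>t t'. t < m \<Longrightarrow> t' < m \<Longrightarrow> t \<noteq> t' \<Longrightarrow> Y t \<inter> Y t' = {}"
  shows "(\<Sum>S\<in>Pow A. \<Sum>T\<in>Pow B. bernoulli_weight a A S * bernoulli_weight b B T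
            * (\<Prod>t<m. h t (S \<inter> X t) (T \<inter> Y t)))
       = (\<Prod>t<m. \<Sum>S\<in>Pow (X t). \<Sum>T\<in>Pow (Y t).
            bernoulli_weight a (X t) S * bernoulli_weight b (Y t) T * h t S T)"
  using assms
proof (induction m arbitrary: A B)
  case 0
  then show ?case
    by (simp add: sum_bernoulli_weight sum_distrib_left[symmetric] sum_distrib_right[symmetric])
next
  case (Suc m)
  define A' where "A' = A - X m"
  define B' where "B' = B - Y m"
  have XY: "X m \<subseteq> A" "Y m \<subseteq> B" using Suc.prems by auto
  have A: "A = A' \<union> X m" and B: "B = B' \<union> Y m" using XY unfolding A'_def B'_def by auto
  have fin: "finite A'" "finite B'" "finite (X m)" "finite (Y m)"
    using Suc.prems(1,2) XY unfolding A'_def B'_def by (auto intro: finite_subset)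
  have disj: "A' \<inter> X m = {}" "B' \<inter> Y m = {}" unfolding A'_def B'_def by auto
  define f where "f S T = bernoulli_weight a A' S * bernoulli_weight b B' T * (\<Prod>t<m. h t (S \<inter> X t) (T \<inter> Y t))"
    for S T
  define g where "g S T = bernoulli_weight a (X m) S * bernoulli_weight b (Y m) T * h m S T" for S T
  have IH: "(\<Sum>S\<in>Pow A'. \<Sum>T\<in>Pow B'. f S T)
      = (\<Prod>t<m. \<Sum>S\<in>Pow (X t). \<Sum>T\<in>Pow (Y t). bernoulli_weight a (X t) S * bernoulli_weight b (Y t) T * h t S T)"
    unfolding f_def
  proof (rule Suc.IH)
    fix t assume "t < m"
    then show "X t \<subseteq> A'" using Suc.prems(3)[of t] Suc.prems(5)[of t m] unfolding A'_def by auto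
    from \<open>t < m\<close> show "Y t \<subseteq> B'" using Suc.prems(4)[of t] Suc.prems(6)[of t m] unfolding B'_def by auto
  next
    fix t t' assume "t < m" "t' < m" "t \<noteq> t'"
    then show "X t \<inter> X t' = {}" "Y t \<inter> Y t' = {}" using Suc.prems(5,6)[of t t'] by auto
  qed (use fin in auto)
  have split: "bernoulli_weight a (A' \<union> X m) (S \<union> S') * bernoulli_weight b (B' \<union> Y m) (T \<union> T')
        * (\<Prod>t<Suc m. h t ((S \<union> S') \<inter> X t) ((T \<union> T') \<inter> Y t)) = f S T * g S' T'"
    if "S \<subseteq> A'" "S' \<subseteq> X m" "T \<subseteq> B'" "T' \<subseteq> Y m" for S S' T T'
  proof -
    have "(S \<union> S') \<inter> X t = S \<inter> X t" "(T \<union> T') \<inter> Y t = T \<inter> Y t" if "t < m" for t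
      using Suc.prems(5,6)[of t m] \<open>t < m\<close> \<open>S' \<subseteq> X m\<close> \<open>T' \<subseteq> Y m\<close> by auto
    moreover have "(S \<union> S') \<inter> X m = S'" "(T \<union> T') \<inter> Y m = T'" using that disj by auto
    ultimately have "(\<Prod>t<Suc m. h t ((S \<union> S') \<inter> X t) ((T \<union> T') \<inter> Y t))
        = (\<Prod>t<m. h t (S \<inter> X t) (T \<inter> Y t)) * h m S' T'"
      by simp
    then show ?thesis
      unfolding bernoulli_weight_Un[OF fin(1,3) disj(1) that(1,2)]
        bernoulli_weight_Un[OF fin(2,4) disj(2) that(3,4)] f_def g_def
      by (simp only: mult_ac)
  qed
  have "(\<Sum>S\<in>Pow A. \<Sum>T\<in>Pow B. bernoulli_weight a A S * bernoulli_weight b B T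
          * (\<Prod>t<Suc m. h t (S \<inter> X t) (T \<inter> Y t)))
      = (\<Sum>S\<in>Pow A'. \<Sum>S'\<in>Pow (X m). \<Sum>T\<in>Pow B'. \<Sum>T'\<in>Pow (Y m). f S T * g S' T')"
    unfolding A B sum_Pow_Un_disjoint[OF fin(1,3) disj(1)] sum_Pow_Un_disjoint[OF fin(2,4) disj(2)]
    by (intro sum.cong[OF refl] split) (simp_all only: PowD)
  also have "\<dots> = (\<Sum>S\<in>Pow A'. \<Sum>T\<in>Pow B'. f S T) * (\<Sum>S'\<in>Pow (X m). \<Sum>T'\<in>Pow (Y m). g S' T')"
    by (simp only: sum_product)
  finally show ?case unfolding IH g_def by simp
qed

section \<open>The repetition channel\<close>

text \<open>Repetition channel: a bit is sent \<open>k\<close> times over a binary symmetric channel with crossover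
  \<open>p\<close>. An output word differing from the input in \<open>d\<close> places has probability
  \<open>pattern_prob p k d\<close>; for uniform input, \<open>likelihood_ratio\<close> is \<open>P(y | x) / P(y)\<close> and
  \<open>repetition_info p k\<close> is the mutual information \<open>I(X; Y)\<close>.\<close>

definition pattern_prob :: "real \<Rightarrow> nat \<Rightarrow> nat \<Rightarrow> real" where
  "pattern_prob p k d = p ^ d * (1 - p) ^ (k - d)"

definition output_weight :: "real \<Rightarrow> nat \<Rightarrow> nat \<Rightarrow> real" where
  "output_weight p k d = pattern_prob p k d + pattern_prob p k (k - d)"

definition likelihood_ratio :: "real \<Rightarrow> nat \<Rightarrow> nat \<Rightarrow> real" where
  "likelihood_ratio p k d = 2 * pattern_prob p k d / output_weight p k d"

definition repetition_info :: "real \<Rightarrow> nat \<Rightarrow> real" where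
  "repetition_info p k = (\<Sum>d\<le>k. of_nat (k choose d) * pattern_prob p k d * log 2 (likelihood_ratio p k d))"

lemma pattern_prob_nonneg: "0 \<le> p \<Longrightarrow> p \<le> 1 \<Longrightarrow> 0 \<le> pattern_prob p k d"
  unfolding pattern_prob_def by simp

lemma pattern_prob_pos: "0 < p \<Longrightarrow> p < 1 \<Longrightarrow> 0 < pattern_prob p k d"
  unfolding pattern_prob_def by simp

lemma sum_pattern_prob: "(\<Sum>d\<le>k. of_nat (k choose d) * pattern_prob p k d) = 1"
  using binomial_ring[of p "1 - p" k] unfolding pattern_prob_def by (simp add: mult.assoc)

lemma output_weight_complement: "d \<le> k \<Longrightarrow> output_weight p k (k - d) = output_weight p k d"
  unfolding output_weight_def by simp

lemma pattern_prob_le_output_weight: "0 \<le> p \<Longrightarrow> p \<le> 1 \<Longrightarrow> pattern_prob p k d \<le> output_weight p k d"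
  unfolding output_weight_def using pattern_prob_nonneg[of p k "k - d"] by simp

lemma likelihood_ratio_nonneg: "0 \<le> p \<Longrightarrow> p \<le> 1 \<Longrightarrow> 0 \<le> likelihood_ratio p k d"
  unfolding likelihood_ratio_def output_weight_def using pattern_prob_nonneg[of p k] by simp

lemma likelihood_ratio_pos:
  "0 \<le> p \<Longrightarrow> p \<le> 1 \<Longrightarrow> pattern_prob p k d \<noteq> 0 \<Longrightarrow> 0 < likelihood_ratio p k d"
  using pattern_prob_nonneg[of p k d] pattern_prob_le_output_weight[of p k d]
  unfolding likelihood_ratio_def by (simp add: order_less_le)

lemma sum_likelihood_ratio_complement:
  assumes "0 \<le> p" "p \<le> 1"
  shows "(\<Sum>d\<le>k. of_nat (k choose d) * pattern_prob p k d
            * (likelihood_ratio p k d + likelihood_ratio p k (k - d))) = 2"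
proof -
  have "pattern_prob p k d * (likelihood_ratio p k d + likelihood_ratio p k (k - d)) = 2 * pattern_prob p k d"
    if "d \<le> k" for d
  proof (cases "output_weight p k d = 0")
    case True
    then have "pattern_prob p k d = 0"
      using pattern_prob_le_output_weight[OF assms] pattern_prob_nonneg[OF assms] by (metis order_antisym)
    then show ?thesis by simp
  next
    case False
    have "likelihood_ratio p k d + likelihood_ratio p k (k - d) = 2 * output_weight p k d / output_weight p k d"
      unfolding likelihood_ratio_def output_weight_complement[OF that]
      by (simp add: output_weight_def add_divide_distrib distrib_left)
    then show ?thesis using False by simp
  qed
  then have "(\<Sum>d\<le>k. of_nat (k choose d) * pattern_prob p k d
            * (likelihood_ratio p k d + likelihood_ratio p k (k - d)))
      = (\<Sum>d\<le>k. 2 * (of_nat (k choose d) * pattern_prob p k d))"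
    by (intro sum.cong[OF refl]) (simp add: mult.assoc)
  also have "\<dots> = 2" by (simp add: sum_distrib_left[symmetric] sum_pattern_prob)
  finally show ?thesis .
qed

lemma sum_pattern_prob_mult_card: "(\<Sum>d\<le>k. of_nat (k choose d) * pattern_prob p k d * real d) = real k * p"
proof (cases k)
  case (Suc j)
  have "of_nat (Suc j choose Suc d) * pattern_prob p (Suc j) (Suc d) * real (Suc d)
      = real (Suc j) * p * (of_nat (j choose d) * pattern_prob p j d)" for d
  proof -
    have "real (Suc j choose Suc d) * real (Suc d) = real (Suc j) * real (j choose d)"
      using Suc_times_binomial[of d j] by (metis mult.commute of_nat_mult)
    then show ?thesis unfolding pattern_prob_def by (simp add: mult_ac)
  qed
  then have "(\<Sum>d\<le>Suc j. of_nat (Suc j choose d) * pattern_prob p (Suc j) d * real d)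
      = (\<Sum>d\<le>j. real (Suc j) * p * (of_nat (j choose d) * pattern_prob p j d))"
    by (subst sum.atMost_Suc_shift) (simp del: binomial_Suc_Suc of_nat_Suc)
  also have "\<dots> = real (Suc j) * p" by (simp add: sum_distrib_left[symmetric] sum_pattern_prob)
  finally show ?thesis using Suc by simp
qed simp

lemma sum_pattern_prob_mult_cocard:
  "(\<Sum>d\<le>k. of_nat (k choose d) * pattern_prob p k d * real (k - d)) = real k * (1 - p)"
proof -
  have "(\<Sum>d\<le>k. of_nat (k choose d) * pattern_prob p k d * real (k - d))
      = (\<Sum>d\<le>k. of_nat (k choose d) * pattern_prob p k d * (real k - real d))"
    by (intro sum.cong[OF refl]) (simp add: of_nat_diff)
  also have "\<dots> = (\<Sum>d\<le>k. of_nat (k choose d) * pattern_prob p k d) * real k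
      - (\<Sum>d\<le>k. of_nat (k choose d) * pattern_prob p k d * real d)"
    by (simp only: right_diff_distrib sum_subtractf sum_distrib_right)
  also have "\<dots> = real k * (1 - p)"
    by (simp only: sum_pattern_prob sum_pattern_prob_mult_card) (simp add: algebra_simps)
  finally show ?thesis .
qed

lemma sum_atMost_reflect: "(\<Sum>d\<le>k. f d) = (\<Sum>d\<le>k. f (k - d :: nat) :: 'a :: comm_monoid_add)"
  by (rule sum.reindex_bij_witness[where i = "\<lambda>d. k - d" and j = "\<lambda>d. k - d"]) auto

text \<open>Pascal's rule splits the row \<open>k\<close> into two copies of row \<open>k - 1\<close>, one of them
  shifted by one; by the symmetry of \<open>f\<close> the shifted copy reflects onto the other.\<close>

lemma sum_binomial_symmetric:
  assumes "1 \<le> k" "\<And>d. d \<le> k \<Longrightarrow> f (k - d) = f d"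
  shows "(\<Sum>d\<le>k. of_nat (k choose d) * f d) = 2 * (\<Sum>d\<le>k - 1. of_nat ((k - 1) choose d) * (f d :: real))"
proof -
  obtain j where k: "k = Suc j" using assms(1) by (cases k) auto
  have "(\<Sum>d\<le>Suc j. of_nat (Suc j choose d) * f d)
      = (\<Sum>d\<le>j. of_nat (j choose d) * f (Suc d)) + (f 0 + (\<Sum>d\<le>j. of_nat (j choose Suc d) * f (Suc d)))"
    by (subst sum.atMost_Suc_shift) (simp add: sum.distrib algebra_simps)
  also have "f 0 + (\<Sum>d\<le>j. of_nat (j choose Suc d) * f (Suc d)) = (\<Sum>d\<le>Suc j. of_nat (j choose d) * f d)"
    by (subst sum.atMost_Suc_shift) simp
  also have "\<dots> = (\<Sum>d\<le>j. of_nat (j choose d) * f d)" by simp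
  also have "(\<Sum>d\<le>j. of_nat (j choose d) * f (Suc d)) = (\<Sum>d\<le>j. of_nat (j choose (j - d)) * f (Suc (j - d)))"
    by (rule sum_atMost_reflect)
  also have "\<dots> = (\<Sum>d\<le>j. of_nat (j choose d) * f d)"
  proof (intro sum.cong[OF refl])
    fix d assume "d \<in> {..j}"
    then have "Suc (j - d) = k - d" "d \<le> k" using k by auto
    then show "of_nat (j choose (j - d)) * f (Suc (j - d)) = of_nat (j choose d) * f d"
      using \<open>d \<in> {..j}\<close> assms(2) binomial_symmetric[of d j] by simp
  qed
  finally show ?thesis using k by simp
qed

lemma pattern_prob_log_likelihood_ratio:
  assumes "0 \<le> p" "p \<le> 1"
  shows "pattern_prob p k d * log 2 (likelihood_ratio p k d)
       = pattern_prob p k d + xlog (pattern_prob p k d) - pattern_prob p k d * log 2 (output_weight p k d)"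
proof (cases "pattern_prob p k d = 0")
  case False
  then have W: "0 < pattern_prob p k d" using pattern_prob_nonneg[OF assms] by (simp add: order_less_le)
  then have "0 < output_weight p k d" using pattern_prob_le_output_weight[OF assms, of k d] by simp
  with W show ?thesis
    unfolding likelihood_ratio_def xlog_def by (simp add: log_divide log_mult algebra_simps)
qed (simp add: xlog_def)

lemma sum_xlog_pattern_prob:
  assumes "0 \<le> p" "p < 1"
  shows "(\<Sum>d\<le>k. of_nat (k choose d) * xlog (pattern_prob p k d)) = real k * xlog p + real k * xlog (1 - p)"
proof (cases "p = 0")
  case True
  then have "xlog (pattern_prob p k d) = 0" for d
    unfolding pattern_prob_def xlog_def by (cases d) auto
  then show ?thesis using True by (simp add: xlog_def)
next
  case False
  then have p: "0 < p" "0 < 1 - p" using assms by auto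
  have "of_nat (k choose d) * xlog (pattern_prob p k d)
      = (of_nat (k choose d) * pattern_prob p k d * real d) * log 2 p
        + (of_nat (k choose d) * pattern_prob p k d * real (k - d)) * log 2 (1 - p)" for d
    using p pattern_prob_pos[of p k d] unfolding xlog_def
    by (simp add: pattern_prob_def log_mult log_nat_power algebra_simps)
  then have "(\<Sum>d\<le>k. of_nat (k choose d) * xlog (pattern_prob p k d))
      = (real k * p) * log 2 p + (real k * (1 - p)) * log 2 (1 - p)"
    by (simp only: sum.distrib sum_distrib_right[symmetric] sum_pattern_prob_mult_card
        sum_pattern_prob_mult_cocard)
  then show ?thesis using p by (simp add: xlog_def)
qed

lemma sum_pattern_prob_log_output_weight:
  assumes "0 \<le> p" "p \<le> 1" "1 \<le> k"
  shows "(\<Sum>d\<le>k. of_nat (k choose d) * (pattern_prob p k d * log 2 (output_weight p k d)))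
       = (\<Sum>d\<le>k - 1. of_nat ((k - 1) choose d) * xlog (output_weight p k d))"
proof -
  define S where "S = (\<Sum>d\<le>k. of_nat (k choose d) * (pattern_prob p k d * log 2 (output_weight p k d)))"
  have "S = (\<Sum>d\<le>k. of_nat (k choose d) * (pattern_prob p k (k - d) * log 2 (output_weight p k d)))"
    unfolding S_def
    by (subst sum_atMost_reflect) (intro sum.cong[OF refl], simp add: output_weight_complement binomial_symmetric[symmetric])
  then have "2 * S = (\<Sum>d\<le>k. of_nat (k choose d) * (output_weight p k d * log 2 (output_weight p k d)))"
    unfolding mult_2 by (subst (1) S_def) (simp add: sum.distrib[symmetric] output_weight_def algebra_simps)
  also have "\<dots> = (\<Sum>d\<le>k. of_nat (k choose d) * xlog (output_weight p k d))"
    by (intro sum.cong[OF refl]) (simp add: xlog_def)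
  also have "\<dots> = 2 * (\<Sum>d\<le>k - 1. of_nat ((k - 1) choose d) * xlog (output_weight p k d))"
    by (rule sum_binomial_symmetric[OF assms(3)]) (simp add: output_weight_complement)
  finally show ?thesis unfolding S_def by simp
qed

lemma repetition_info_eq_fwd_info:
  assumes "0 \<le> p" "p < 1" "1 \<le> k"
  shows "repetition_info p k = fwd_info p k"
proof -
  have p: "p \<le> 1" using assms by simp
  have "repetition_info p k = (\<Sum>d\<le>k. of_nat (k choose d) * pattern_prob p k d
      + of_nat (k choose d) * xlog (pattern_prob p k d)
      - of_nat (k choose d) * (pattern_prob p k d * log 2 (output_weight p k d)))"
    unfolding repetition_info_def
    by (intro sum.cong[OF refl], subst mult.assoc, subst pattern_prob_log_likelihood_ratio[OF assms(1) p])
      (simp add: algebra_simps)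
  also have "\<dots> = 1 + (real k * xlog p + real k * xlog (1 - p))
      - (\<Sum>d\<le>k - 1. of_nat ((k - 1) choose d) * xlog (output_weight p k d))"
    by (simp only: sum_subtractf sum.distrib sum_pattern_prob sum_xlog_pattern_prob[OF assms(1,2)]
        sum_pattern_prob_log_output_weight[OF assms(1) p assms(3)])
  also have "(\<Sum>d\<le>k - 1. of_nat ((k - 1) choose d) * xlog (output_weight p k d))
      = (\<Sum>d = 0..k - 1. real ((k - 1) choose d) * xlog ((1 - p) ^ d * p ^ (k - d) + (1 - p) ^ (k - d) * p ^ d))"
    unfolding atMost_atLeast0 output_weight_def pattern_prob_def
    by (intro sum.cong[OF refl]) (use assms(3) in \<open>simp add: algebra_simps\<close>)
  finally show ?thesis unfolding fwd_info_def Let_def by simp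
qed

lemma ln_one_plus_le_sqrt: "0 \<le> x \<Longrightarrow> ln (1 + x) \<le> 2 * sqrt x"
proof -
  assume x: "0 \<le> x"
  have "1 + x \<le> (1 + sqrt x)\<^sup>2" using x by (simp add: power2_eq_square algebra_simps)
  then have "ln (1 + x) \<le> ln ((1 + sqrt x)\<^sup>2)" using x by (subst ln_le_cancel_iff) auto
  also have "\<dots> = 2 * ln (1 + sqrt x)" by (simp add: ln_realpow)
  also have "\<dots> \<le> 2 * sqrt x" using ln_add_one_self_le_self[of "sqrt x"] x by simp
  finally show ?thesis .
qed

text \<open>Bhattacharyya-type estimate: the information loss of each output pattern is controlled
  by the geometric mean of the two pattern probabilities it could come from.\<close>

lemma pattern_prob_info_loss_le:
  assumes "0 \<le> p" "p \<le> 1" "d \<le> k"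
  shows "pattern_prob p k d * (1 - log 2 (likelihood_ratio p k d)) \<le> 2 * sqrt (p * (1 - p)) ^ k / ln 2"
proof (cases "pattern_prob p k d = 0")
  case False
  define W where "W = pattern_prob p k d"
  define W' where "W' = pattern_prob p k (k - d)"
  have W: "0 < W" using False pattern_prob_nonneg[OF assms(1,2)] unfolding W_def by (simp add: order_less_le)
  have W': "0 \<le> W'" using pattern_prob_nonneg[OF assms(1,2)] unfolding W'_def by simp
  have "1 - log 2 (likelihood_ratio p k d) = log 2 ((W + W') / W)"
    unfolding likelihood_ratio_def output_weight_def W_def[symmetric] W'_def[symmetric] using W W'
    by (simp add: log_divide log_mult)
  also have "\<dots> = ln (1 + W' / W) / ln 2"
    using W by (simp add: log_def add_divide_distrib)
  also have "\<dots> \<le> 2 * sqrt (W' / W) / ln 2"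
    by (rule divide_right_mono) (use ln_one_plus_le_sqrt[of "W' / W"] W W' in auto)
  finally have "W * (1 - log 2 (likelihood_ratio p k d)) \<le> W * (2 * sqrt (W' / W) / ln 2)"
    using W by (intro mult_left_mono) auto
  also have "\<dots> = 2 * sqrt (W * W') / ln 2"
    using W W' by (simp add: real_sqrt_divide real_sqrt_mult field_simps)
  also have "W * W' = (p * (1 - p)) ^ k"
  proof -
    have "W * W' = (p ^ d * p ^ (k - d)) * ((1 - p) ^ d * (1 - p) ^ (k - d))"
      using assms(3) unfolding W_def W'_def pattern_prob_def by (simp add: mult_ac)
    then show ?thesis using assms(3) by (simp add: power_add[symmetric] power_mult_distrib)
  qed
  finally show ?thesis unfolding W_def by (simp add: real_sqrt_power)
qed (use assms in simp)

lemma one_minus_repetition_info_le: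
  assumes "0 \<le> p" "p \<le> 1"
  shows "1 - repetition_info p k \<le> 2 * (2 * sqrt (p * (1 - p))) ^ k / ln 2"
proof -
  have "1 - repetition_info p k
      = (\<Sum>d\<le>k. of_nat (k choose d) * (pattern_prob p k d * (1 - log 2 (likelihood_ratio p k d))))"
    unfolding repetition_info_def using sum_pattern_prob[of k p]
    by (simp add: right_diff_distrib sum_subtractf mult.assoc)
  also have "\<dots> \<le> (\<Sum>d\<le>k. of_nat (k choose d) * (2 * sqrt (p * (1 - p)) ^ k / ln 2))"
    by (intro sum_mono mult_left_mono pattern_prob_info_loss_le assms) auto
  also have "\<dots> = 2 ^ k * (2 * sqrt (p * (1 - p)) ^ k / ln 2)"
    by (simp only: sum_distrib_right[symmetric] of_nat_sum[symmetric] choose_row_sum) simp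
  also have "\<dots> = 2 * (2 * sqrt (p * (1 - p))) ^ k / ln 2" by (simp add: power_mult_distrib)
  finally show ?thesis .
qed

lemma eventually_repetition_info_ge:
  assumes "0 \<le> p" "p < 1/2" "\<zeta> > 0"
  shows "eventually (\<lambda>k. repetition_info p k \<ge> 1 - \<zeta>) sequentially"
proof -
  define r where "r = 2 * sqrt (p * (1 - p))"
  have "0 < (1 - 2 * p)\<^sup>2" using assms by simp
  then have "p * (1 - p) < 1/4" by (simp add: power2_eq_square algebra_simps)
  then have "sqrt (p * (1 - p)) < sqrt (1/4)" by (simp only: real_sqrt_less_iff)
  then have "r < 1" unfolding r_def by (simp add: real_sqrt_divide)
  moreover have "0 \<le> r" using assms unfolding r_def by simp
  ultimately have "(\<lambda>k. r ^ k) \<longlonglongrightarrow> 0" by (intro LIMSEQ_power_zero) auto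
  then have "eventually (\<lambda>k. r ^ k < \<zeta> * ln 2 / 2) sequentially"
    by (rule order_tendstoD) (use assms in simp)
  then show ?thesis
  proof eventually_elim
    case (elim k)
    have "1 - repetition_info p k \<le> 2 * r ^ k / ln 2"
      unfolding r_def by (rule one_minus_repetition_info_le) (use assms in auto)
    also have "\<dots> \<le> \<zeta>" using elim by (simp add: field_simps)
    finally show ?case by simp
  qed
qed

lemma repetition_info_K_thr_ge:
  assumes "0 \<le> p" "p < 1/2" "\<zeta> > 0"
  shows "repetition_info p (K_thr p \<zeta>) \<ge> 1 - \<zeta>"
proof -
  obtain k where k: "0 < k" "repetition_info p k \<ge> 1 - \<zeta>"
  proof -
    have "eventually (\<lambda>k. 0 < k \<and> repetition_info p k \<ge> 1 - \<zeta>) sequentially"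
      using eventually_repetition_info_ge[OF assms] eventually_gt_at_top[of 0] by eventually_elim simp
    then show ?thesis using that by (auto simp: eventually_sequentially)
  qed
  then have "0 < k \<and> fwd_info p k \<ge> 1 - \<zeta>" using repetition_info_eq_fwd_info[of p k] assms by simp
  then have "0 < K_thr p \<zeta> \<and> fwd_info p (K_thr p \<zeta>) \<ge> 1 - \<zeta>"
    unfolding K_thr_def by (rule LeastI)
  then show ?thesis using repetition_info_eq_fwd_info[of p "K_thr p \<zeta>"] assms by simp
qed

section \<open>Converse: at most one bit per channel use\<close>

lemma finite_grid [simp]: "finite (grid K n)"
  unfolding grid_def by simp

lemma noise_weight_nonneg:
  "(\<And>i. 0 \<le> p i) \<Longrightarrow> (\<And>i. p i \<le> 1) \<Longrightarrow> 0 \<le> noise_weight p K n S"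
  unfolding noise_weight_def by (intro prod_nonneg) (auto simp: diff_le_eq)

lemma sum_noise_weight: "(\<Sum>S\<in>Pow (grid K n). noise_weight p K n S) = 1"
  using sum_Pow_prod_mem[of "grid K n" "\<lambda>(i, t) b. if b then p i else 1 - p i"]
  unfolding noise_weight_def by (simp add: case_prod_beta')

lemma noise_weight_const: "noise_weight (\<lambda>_. a) K n S = bernoulli_weight a (grid K n) S"
  unfolding noise_weight_def bernoulli_weight_def by (intro prod.cong) auto

lemma received_cong:
  assumes "\<And>t. t < n \<Longrightarrow> enc w t = enc w' t"
  shows "received K n enc f w Zs Es = received K n enc f w' Zs Es"
proof (intro ext)
  fix i t
  have "t < n \<Longrightarrow> map (relay_in enc w Zs i) [0..<t] = map (relay_in enc w' Zs i) [0..<t]"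
    by (rule map_cong[OF refl]) (use assms in \<open>auto simp: relay_in_def\<close>)
  then show "received K n enc f w Zs Es i t = received K n enc f w' Zs Es i t"
    unfolding received_def by (cases "t < n") (simp_all del: map_eq_conv)
qed

text \<open>Whatever the noise, the received array is a function of the \<open>n\<close> bits sent by the
  source, so at most \<open>2 ^ n\<close> messages are decoded correctly.\<close>

lemma card_decoded_correctly_le:
  "card {w \<in> {..<M}. dec (received K n enc f w Zs Es) = w} \<le> 2 ^ n"
proof -
  define S where "S = {w \<in> {..<M}. dec (received K n enc f w Zs Es) = w}"
  define codeword where "codeword w = {t. t < n \<and> enc w t}" for w
  have "inj_on codeword S"
  proof (rule inj_onI)
    fix w w' assume w: "w \<in> S" "w' \<in> S" "codeword w = codeword w'"
    then have "received K n enc f w Zs Es = received K n enc f w' Zs Es"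
      by (intro received_cong) (auto simp: codeword_def set_eq_iff)
    then show "w = w'" using w(1,2) unfolding S_def by auto
  qed
  moreover have "codeword ` S \<subseteq> Pow {..<n}" unfolding codeword_def by auto
  ultimately have "card S \<le> card (Pow {..<n})" by (intro card_inj_on_le) auto
  then show ?thesis unfolding S_def by (simp add: card_Pow)
qed

lemma avg_error_ge:
  assumes "\<And>i. 0 \<le> ps i" "\<And>i. ps i \<le> 1" "\<And>i. 0 \<le> pd i" "\<And>i. pd i \<le> 1" "M > 0"
  shows "avg_error K ps pd n M enc f dec \<ge> 1 - 2 ^ n / real M"
proof -
  define G where "G = grid K n"
  define errors where
    "errors Zs Es = (\<Sum>w<M. if dec (received K n enc f w Zs Es) \<noteq> w then 1 else 0 :: real)" for Zs Es
  have errors_ge: "real M - 2 ^ n \<le> errors Zs Es" for Zs Es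
  proof -
    have "errors Zs Es = (\<Sum>w<M. 1 - (if dec (received K n enc f w Zs Es) = w then 1 else 0))"
      unfolding errors_def by (intro sum.cong) auto
    also have "\<dots> = real M - real (card {w \<in> {..<M}. dec (received K n enc f w Zs Es) = w})"
      by (simp add: sum_subtractf sum.If_cases Int_def)
    moreover have "real (card {w \<in> {..<M}. dec (received K n enc f w Zs Es) = w}) \<le> real ((2::nat) ^ n)"
      using card_decoded_correctly_le by (simp only: of_nat_le_iff)
    ultimately show ?thesis by simp
  qed
  have "avg_error K ps pd n M enc f dec = (\<Sum>w<M. \<Sum>Zs\<in>Pow G. \<Sum>Es\<in>Pow G. noise_weight ps K n Zs
      * noise_weight pd K n Es * (if dec (received K n enc f w Zs Es) \<noteq> w then 1 else 0)) / real M"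
    unfolding avg_error_def G_def by simp
  also have "\<dots> = (\<Sum>Zs\<in>Pow G. \<Sum>Es\<in>Pow G. noise_weight ps K n Zs * noise_weight pd K n Es * errors Zs Es) / real M"
    unfolding errors_def sum_distrib_left
    by (subst sum.swap, intro arg_cong2[of _ _ _ _ "(/)"] sum.cong[OF refl] sum.swap refl)
  also have "\<dots> \<ge> (\<Sum>Zs\<in>Pow G. \<Sum>Es\<in>Pow G. noise_weight ps K n Zs * noise_weight pd K n Es
        * (real M - 2 ^ n)) / real M"
    using assms by (intro divide_right_mono sum_mono mult_left_mono errors_ge mult_nonneg_nonneg
        noise_weight_nonneg) auto
  moreover have "(\<Sum>Zs\<in>Pow G. \<Sum>Es\<in>Pow G. noise_weight ps K n Zs * noise_weight pd K n Es
        * (real M - 2 ^ n)) = real M - 2 ^ n"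
    unfolding G_def sum_distrib_right[symmetric] sum_product[symmetric] sum_noise_weight by simp
  ultimately show ?thesis using assms(5) by (simp add: field_simps)
qed

lemma num_msgs_bounds:
  "2 powr (real n * R) \<le> real (num_msgs n R)" "real (num_msgs n R) < 2 powr (real n * R) + 1"
  "1 \<le> num_msgs n R"
proof -
  have "real (num_msgs n R) = of_int \<lceil>2 powr (real n * R)\<rceil>"
    unfolding num_msgs_def by (simp add: order_less_imp_le)
  then show "2 powr (real n * R) \<le> real (num_msgs n R)" "real (num_msgs n R) < 2 powr (real n * R) + 1"
    using ceiling_correct[of "2 powr (real n * R)"] by linarith+
  then show "1 \<le> num_msgs n R" using powr_gt_zero[of 2 "real n * R"] by linarith
qed

lemma achievable_le_one:
  assumes "\<And>i. 0 \<le> ps i" "\<And>i. ps i \<le> 1" "\<And>i. 0 \<le> pd i" "\<And>i. pd i \<le> 1"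
    and "achievable K ps pd R"
  shows "R \<le> 1"
proof (rule ccontr)
  assume "\<not> R \<le> 1"
  obtain N where N: "\<And>n. n \<ge> N \<Longrightarrow> \<exists>enc f dec. avg_error K ps pd n (num_msgs n R) enc f dec \<le> 1/2"
    using assms(5) unfolding achievable_def by (force dest: spec[of _ "1/2"])
  obtain n :: nat where n: "n \<ge> N" "1 / (R - 1) < real n"
    using reals_Archimedean2[of "1 / (R - 1)"] by (metis max.cobounded1 max.cobounded2 of_nat_max order_less_le_trans)
  define M where "M = num_msgs n R"
  obtain enc f dec where "avg_error K ps pd n M enc f dec \<le> 1/2" using N[OF n(1)] unfolding M_def by blast
  moreover have "M > 0" using num_msgs_bounds(3) unfolding M_def by (simp add: Suc_le_eq)
  ultimately have "1 - 2 ^ n / real M \<le> 1/2" using avg_error_ge[OF assms(1-4)] by (meson order_trans)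
  then have "2 powr (real n * R) \<le> 2 powr (real n + 1)"
    using num_msgs_bounds(1)[of n R] \<open>M > 0\<close> unfolding M_def
    by (simp add: field_simps powr_add powr_realpow)
  moreover have "real n * (R - 1) > 1" using n(2) \<open>\<not> R \<le> 1\<close> by (simp add: field_simps)
  ultimately show False by (simp add: algebra_simps)
qed

lemma achievable_zero: "achievable K ps pd 0"
  unfolding achievable_def num_msgs_def
  by (intro allI impI exI[of _ 0] exI[of _ "\<lambda>_ _. False"] exI[of _ "\<lambda>_ _ _. False"] exI[of _ "\<lambda>_. 0"])
    (simp add: avg_error_def)

lemma capacity_le_one:
  assumes "\<And>i. 0 \<le> ps i" "\<And>i. ps i \<le> 1" "\<And>i. 0 \<le> pd i" "\<And>i. pd i \<le> 1"
  shows "capacity K ps pd \<le> 1"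
  unfolding capacity_def by (rule cSup_least) (use achievable_zero achievable_le_one[OF assms] in auto)

section \<open>Achievability with forwarding relays\<close>

text \<open>With forwarding relays the copy of \<open>U[t]\<close> sent by relay \<open>i\<close> reaches the destination at
  time \<open>t + 1\<close>, flipped iff exactly one of \<open>Z\<^sub>i[t]\<close> and \<open>E\<^sub>i[t + 1]\<close> is set.\<close>

definition net_flips :: "nat \<Rightarrow> (nat \<times> nat) set \<Rightarrow> (nat \<times> nat) set \<Rightarrow> nat \<Rightarrow> nat set" where
  "net_flips k Zs Es t = {i. i < k \<and> ((i, t) \<in> Zs) \<noteq> ((i, Suc t) \<in> Es)}"

lemma sum_column_net_flips:
  "(\<Sum>S\<in>Pow ((\<lambda>i. (i, t)) ` {..<k}). \<Sum>T\<in>Pow ((\<lambda>i. (i, Suc t)) ` {..<k}).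
      bernoulli_weight a ((\<lambda>i. (i, t)) ` {..<k}) S * bernoulli_weight b ((\<lambda>i. (i, Suc t)) ` {..<k}) T
      * H (card (net_flips k S T t)))
   = (\<Sum>d\<le>k. of_nat (k choose d) * pattern_prob (bsc_cascade a b) k d * H d)"
proof -
  have inj: "inj (\<lambda>i::nat. (i, t))" "inj (\<lambda>i::nat. (i, Suc t))" by (auto simp: inj_on_def)
  have "net_flips k ((\<lambda>i. (i, t)) ` S) ((\<lambda>i. (i, Suc t)) ` T) t = sym_diff S T"
    if "S \<subseteq> {..<k}" "T \<subseteq> {..<k}" for S T
    using that unfolding net_flips_def by auto
  then have "(\<Sum>S\<in>Pow ((\<lambda>i. (i, t)) ` {..<k}). \<Sum>T\<in>Pow ((\<lambda>i. (i, Suc t)) ` {..<k}).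
      bernoulli_weight a ((\<lambda>i. (i, t)) ` {..<k}) S * bernoulli_weight b ((\<lambda>i. (i, Suc t)) ` {..<k}) T
      * H (card (net_flips k S T t)))
    = (\<Sum>S\<in>Pow {..<k}. \<Sum>T\<in>Pow {..<k}. bernoulli_weight a {..<k} S * bernoulli_weight b {..<k} T
      * H (card (sym_diff S T)))"
    unfolding sum_Pow_image[OF inj(1)] sum_Pow_image[OF inj(2)]
      bernoulli_weight_image[OF inj(1)] bernoulli_weight_image[OF inj(2)]
    by (intro sum.cong[OF refl]) simp
  also have "\<dots> = (\<Sum>N\<in>Pow {..<k}. bernoulli_weight (bsc_cascade a b) {..<k} N * H (card N))"
    by (rule sum_bernoulli_weight_sym_diff) simp
  also have "\<dots> = (\<Sum>N\<in>Pow {..<k}. pattern_prob (bsc_cascade a b) k (card N) * H (card N))"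
    by (intro sum.cong[OF refl]) (simp add: bernoulli_weight_card pattern_prob_def)
  also have "\<dots> = (\<Sum>d\<le>k. of_nat (k choose d) * pattern_prob (bsc_cascade a b) k d * H d)"
    using sum_Pow_card[of "{..<k}" "\<lambda>d. pattern_prob (bsc_cascade a b) k d * H d"] by (simp add: mult.assoc)
  finally show ?thesis .
qed

text \<open>The flip sets of distinct time steps involve disjoint noise positions, so their
  contributions factorize.\<close>

lemma sum_noise_prod_net_flips:
  assumes "k \<le> K" "m < n"
  shows "(\<Sum>Zs\<in>Pow (grid K n). \<Sum>Es\<in>Pow (grid K n).
            bernoulli_weight a (grid K n) Zs * bernoulli_weight b (grid K n) Es
            * (\<Prod>t<m. H (card (net_flips k Zs Es t))))
       = (\<Sum>d\<le>k. of_nat (k choose d) * pattern_prob (bsc_cascade a b) k d * H d) ^ m"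
proof -
  define X where "X t = (\<lambda>i. (i, t)) ` {..<k}" for t :: nat
  define Y where "Y t = (\<lambda>i. (i, Suc t)) ` {..<k}" for t :: nat
  have restrict: "net_flips k Zs Es t = net_flips k (Zs \<inter> X t) (Es \<inter> Y t) t" for Zs Es t
    unfolding net_flips_def X_def Y_def by auto
  have "(\<Sum>Zs\<in>Pow (grid K n). \<Sum>Es\<in>Pow (grid K n).
            bernoulli_weight a (grid K n) Zs * bernoulli_weight b (grid K n) Es
            * (\<Prod>t<m. H (card (net_flips k Zs Es t))))
      = (\<Sum>Zs\<in>Pow (grid K n). \<Sum>Es\<in>Pow (grid K n).
            bernoulli_weight a (grid K n) Zs * bernoulli_weight b (grid K n) Es
            * (\<Prod>t<m. (\<lambda>t S T. H (card (net_flips k S T t))) t (Zs \<inter> X t) (Es \<inter> Y t)))"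
    by (subst restrict) simp
  also have "\<dots> = (\<Prod>t<m. \<Sum>S\<in>Pow (X t). \<Sum>T\<in>Pow (Y t).
            bernoulli_weight a (X t) S * bernoulli_weight b (Y t) T * H (card (net_flips k S T t)))"
    by (rule sum_bernoulli_weight_prod_blocks) (use assms in \<open>auto simp: grid_def X_def Y_def\<close>)
  finally show ?thesis unfolding X_def Y_def sum_column_net_flips by simp
qed

text \<open>The decoder uses only the first \<open>k\<close> relays and the first \<open>m\<close> source symbols. The score of a
  candidate codeword \<open>x\<close> is the likelihood ratio of the observed outputs given \<open>x\<close> against their
  probability under uniformly random inputs.\<close>

definition decoding_score :: "real \<Rightarrow> nat \<Rightarrow> nat \<Rightarrow> (nat \<Rightarrow> bool) \<Rightarrow> (nat \<Rightarrow> nat \<Rightarrow> bool) \<Rightarrow> real" where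
  "decoding_score p k m x Y = (\<Prod>t<m. likelihood_ratio p k (card {i. i < k \<and> Y i (Suc t) \<noteq> x t}))"

definition threshold_decoder ::
    "real \<Rightarrow> nat \<Rightarrow> nat \<Rightarrow> real \<Rightarrow> nat \<Rightarrow> (nat \<times> nat) set \<Rightarrow> (nat \<Rightarrow> nat \<Rightarrow> bool) \<Rightarrow> nat" where
  "threshold_decoder p k m \<theta> M C Y = (LEAST w. w < M \<and> \<theta> < decoding_score p k m (\<lambda>t. (w, t) \<in> C) Y)"

definition noise_score ::
    "real \<Rightarrow> nat \<Rightarrow> nat \<Rightarrow> (nat \<Rightarrow> bool) \<Rightarrow> (nat \<Rightarrow> bool) \<Rightarrow> (nat \<times> nat) set \<Rightarrow> (nat \<times> nat) set \<Rightarrow> real" where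
  "noise_score p k m x y Zs Es = (\<Prod>t<m. likelihood_ratio p k
      (if x t = y t then card (net_flips k Zs Es t) else k - card (net_flips k Zs Es t)))"

lemma noise_score_nonneg: "0 \<le> p \<Longrightarrow> p \<le> 1 \<Longrightarrow> 0 \<le> noise_score p k m x y Zs Es"
  unfolding noise_score_def by (intro prod_nonneg) (simp add: likelihood_ratio_nonneg)

lemma received_fwd_relays:
  assumes "i < K" "Suc t < n"
  shows "received K n enc fwd_relays w Zs Es i (Suc t) = ((enc w t \<noteq> ((i, t) \<in> Zs)) \<noteq> ((i, Suc t) \<in> Es))"
  using assms unfolding received_def fwd_relays_def relay_in_def by simp

lemma decoding_score_received_fwd:
  assumes "k \<le> K" "m < n"
  shows "decoding_score p k m x (received K n enc fwd_relays w Zs Es) = noise_score p k m x (enc w) Zs Es"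
  unfolding decoding_score_def noise_score_def
proof (intro prod.cong[OF refl])
  fix t assume "t \<in> {..<m}"
  then have "{i. i < k \<and> received K n enc fwd_relays w Zs Es i (Suc t) \<noteq> x t}
      = (if x t = enc w t then net_flips k Zs Es t else {..<k} - net_flips k Zs Es t)"
    using assms received_fwd_relays[of _ K t n enc w Zs Es] unfolding net_flips_def by (auto simp: set_eq_iff)
  moreover have "net_flips k Zs Es t \<subseteq> {..<k}" unfolding net_flips_def by auto
  ultimately show "likelihood_ratio p k (card {i. i < k \<and> received K n enc fwd_relays w Zs Es i (Suc t) \<noteq> x t})
      = likelihood_ratio p k (if x t = enc w t then card (net_flips k Zs Es t) else k - card (net_flips k Zs Es t))"
    by (simp add: card_Diff_subset finite_subset)
qed

lemma threshold_decoder_error_le: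
  assumes "w < M"
  shows "(if threshold_decoder p k m \<theta> M C Y \<noteq> w then 1 else 0 :: real)
     \<le> (if decoding_score p k m (\<lambda>t. (w, t) \<in> C) Y \<le> \<theta> then 1 else 0)
       + (\<Sum>w'\<in>{..<M} - {w}. if \<theta> < decoding_score p k m (\<lambda>t. (w', t) \<in> C) Y then 1 else 0)"
    (is "_ \<le> ?miss + (\<Sum>w'\<in>_. ?false w')")
proof (cases "\<exists>w'\<in>{..<M} - {w}. \<theta> < decoding_score p k m (\<lambda>t. (w', t) \<in> C) Y")
  case True
  then obtain w' where "w' \<in> {..<M} - {w}" "\<theta> < decoding_score p k m (\<lambda>t. (w', t) \<in> C) Y" by blast
  then have "1 \<le> (\<Sum>w'\<in>{..<M} - {w}. ?false w')"
    using member_le_sum[of w' "{..<M} - {w}" ?false] by simp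
  moreover have "0 \<le> ?miss" by simp
  ultimately show ?thesis by simp
next
  case False
  have "0 \<le> (\<Sum>w'\<in>{..<M} - {w}. ?false w')" by (simp add: sum_nonneg)
  moreover have "threshold_decoder p k m \<theta> M C Y = w" if "\<theta> < decoding_score p k m (\<lambda>t. (w, t) \<in> C) Y"
    unfolding threshold_decoder_def by (rule Least_equality) (use that False assms in auto)
  ultimately show ?thesis by auto
qed

definition chernoff_sum :: "real \<Rightarrow> nat \<Rightarrow> real \<Rightarrow> real \<Rightarrow> real" where
  "chernoff_sum p k \<gamma> s =
     (\<Sum>d\<le>k. of_nat (k choose d) * pattern_prob p k d * (2 powr (\<gamma> * s) * likelihood_ratio p k d powr (- s)))"

lemma chernoff_sum_nonneg: "0 \<le> p \<Longrightarrow> p \<le> 1 \<Longrightarrow> 0 \<le> chernoff_sum p k \<gamma> s"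
  unfolding chernoff_sum_def by (intro sum_nonneg mult_nonneg_nonneg pattern_prob_nonneg) auto

text \<open>As a function of \<open>s\<close>, the Chernoff sum equals \<open>1\<close> at \<open>s = 0\<close> and has derivative
  \<open>ln 2 * (\<gamma> - repetition_info p k)\<close> there.\<close>

lemma exists_chernoff_sum_less_one:
  assumes "0 \<le> p" "p \<le> 1" "\<gamma> < repetition_info p k"
  shows "\<exists>s>0. chernoff_sum p k \<gamma> s < 1"
proof -
  define c where "c d = of_nat (k choose d) * pattern_prob p k d" for d
  define b where "b d = \<gamma> * ln 2 - ln (likelihood_ratio p k d)" for d
  define f where "f s = (\<Sum>d\<le>k. c d * exp (s * b d))" for s
  have chernoff_f: "chernoff_sum p k \<gamma> s = f s" for s
    unfolding chernoff_sum_def f_def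
  proof (intro sum.cong[OF refl])
    fix d
    show "of_nat (k choose d) * pattern_prob p k d * (2 powr (\<gamma> * s) * likelihood_ratio p k d powr - s)
        = c d * exp (s * b d)"
    proof (cases "pattern_prob p k d = 0")
      case False
      then have "0 < likelihood_ratio p k d" by (rule likelihood_ratio_pos[OF assms(1,2)])
      then show ?thesis by (simp add: c_def powr_def b_def exp_add[symmetric] algebra_simps)
    qed (simp add: c_def)
  qed
  have deriv: "(f has_real_derivative (\<Sum>d\<le>k. c d * b d)) (at 0)"
    unfolding f_def by (auto intro!: derivative_eq_intros simp: mult.commute)
  have "(\<Sum>d\<le>k. c d * b d) = ln 2 * (\<gamma> * (\<Sum>d\<le>k. c d) - (\<Sum>d\<le>k. c d * log 2 (likelihood_ratio p k d)))"
  proof -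
    have "c d * b d = ln 2 * (\<gamma> * c d - c d * log 2 (likelihood_ratio p k d))" for d
      unfolding b_def by (simp add: log_def algebra_simps)
    then show ?thesis by (simp only: sum_distrib_left[symmetric] sum_subtractf)
  qed
  also have "\<dots> = ln 2 * (\<gamma> - repetition_info p k)"
    unfolding c_def repetition_info_def by (simp add: sum_pattern_prob)
  finally have "(\<Sum>d\<le>k. c d * b d) < 0" using assms(3) by (simp add: mult_pos_neg)
  then obtain e where e: "e > 0" "\<And>h. h > 0 \<Longrightarrow> h < e \<Longrightarrow> f (0 + h) < f 0"
    using DERIV_neg_dec_right[OF deriv] by blast
  moreover have "f 0 = 1" unfolding f_def c_def by (simp add: sum_pattern_prob)
  ultimately have "f (e / 2) < 1" using e(2)[of "e / 2"] by simp
  then show ?thesis using e(1) chernoff_f by (intro exI[of _ "e / 2"]) auto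
qed

lemma bernoulli_weight_zero_nonzero:
  assumes "finite A" "bernoulli_weight 0 A S \<noteq> 0"
  shows "S \<inter> A = {}"
  using assms unfolding bernoulli_weight_def by (auto simp: prod_zero_iff)

lemma pattern_prob_net_flips_nonzero:
  assumes "0 \<le> a" "a < 1/2" "0 \<le> b" "b < 1/2" "k \<le> K" "Suc t < n"
    and "bernoulli_weight a (grid K n) Zs * bernoulli_weight b (grid K n) Es \<noteq> 0"
  shows "pattern_prob (bsc_cascade a b) k (card (net_flips k Zs Es t)) \<noteq> 0"
proof (cases "bsc_cascade a b = 0")
  case True
  then have "a = 0" "b = 0"
    using assms(1-4) unfolding bsc_cascade_def by (auto simp: add_nonneg_eq_0_iff)
  then have "Zs \<inter> grid K n = {}" "Es \<inter> grid K n = {}"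
    using assms(7) bernoulli_weight_zero_nonzero[of "grid K n"] by auto
  then have "net_flips k Zs Es t = {}" using assms(5,6) unfolding net_flips_def grid_def by auto
  then show ?thesis using True by (simp add: pattern_prob_def)
next
  case False
  then have "0 < bsc_cascade a b" "bsc_cascade a b < 1" using bsc_cascade_bounds[OF assms(1-4)] by auto
  then have "0 < pattern_prob (bsc_cascade a b) k (card (net_flips k Zs Es t))" by (rule pattern_prob_pos)
  then show ?thesis by simp
qed

lemma indicator_le_ratio_powr:
  fixes T \<theta> s :: real
  assumes "0 < T" "0 \<le> s"
  shows "(if T \<le> \<theta> then 1 else 0) \<le> (\<theta> / T) powr s"
  using assms by (auto intro: ge_one_powr_ge_zero)

text \<open>Chernoff bound: the score of the transmitted codeword rarely falls below the threshold.\<close>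

lemma sum_noise_score_le_threshold:
  assumes "0 \<le> ps" "ps < 1/2" "0 \<le> pd" "pd < 1/2" "k \<le> K" "m < n" "s > 0"
  defines "p \<equiv> bsc_cascade ps pd"
  shows "(\<Sum>Zs\<in>Pow (grid K n). \<Sum>Es\<in>Pow (grid K n). bernoulli_weight ps (grid K n) Zs
            * bernoulli_weight pd (grid K n) Es
            * (if noise_score p k m y y Zs Es \<le> 2 powr (\<gamma> * m) then 1 else 0)) \<le> chernoff_sum p k \<gamma> s ^ m"
proof -
  define G where "G = grid K n"
  define \<theta> where "\<theta> = 2 powr (\<gamma> * m)"
  define w where "w Zs Es = bernoulli_weight ps G Zs * bernoulli_weight pd G Es" for Zs Es
  have p: "0 \<le> p" "p \<le> 1" using bsc_cascade_bounds[OF assms(1-4)] unfolding p_def by auto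
  have score: "noise_score p k m y y Zs Es = (\<Prod>t<m. likelihood_ratio p k (card (net_flips k Zs Es t)))" for Zs Es
    unfolding noise_score_def by simp
  have markov: "w Zs Es * (if noise_score p k m y y Zs Es \<le> \<theta> then 1 else 0)
      \<le> \<theta> powr s * (w Zs Es * (\<Prod>t<m. likelihood_ratio p k (card (net_flips k Zs Es t)) powr (- s)))" for Zs Es
  proof (cases "w Zs Es = 0")
    case False
    have "0 \<le> w Zs Es" unfolding w_def using assms(1-4) by (simp add: bernoulli_weight_nonneg)
    then have w: "0 < w Zs Es" using False by simp
    have "0 < likelihood_ratio p k (card (net_flips k Zs Es t))" if "t < m" for t
    proof (rule likelihood_ratio_pos[OF p])
      show "pattern_prob p k (card (net_flips k Zs Es t)) \<noteq> 0"
        unfolding p_def using False that assms(6)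
        by (intro pattern_prob_net_flips_nonzero[OF assms(1-5)]) (simp_all add: w_def G_def)
    qed
    then have T: "0 < noise_score p k m y y Zs Es" unfolding score by (intro prod_pos) auto
    have "(if noise_score p k m y y Zs Es \<le> \<theta> then 1 else 0) \<le> (\<theta> / noise_score p k m y y Zs Es) powr s"
      using T assms(7) by (intro indicator_le_ratio_powr) auto
    also have "\<dots> = \<theta> powr s * noise_score p k m y y Zs Es powr (- s)"
      using T by (subst powr_divide) (auto simp: \<theta>_def powr_minus divide_inverse)
    also have "\<dots> = \<theta> powr s * (\<Prod>t<m. likelihood_ratio p k (card (net_flips k Zs Es t)) powr (- s))"
      unfolding score prod_powr_distrib ..
    finally show ?thesis using w by (simp add: mult_left_mono mult.left_commute)
  qed simp
  have "(\<Sum>Zs\<in>Pow G. \<Sum>Es\<in>Pow G. w Zs Es * (if noise_score p k m y y Zs Es \<le> \<theta> then 1 else 0))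
      \<le> \<theta> powr s * (\<Sum>Zs\<in>Pow G. \<Sum>Es\<in>Pow G.
            w Zs Es * (\<Prod>t<m. likelihood_ratio p k (card (net_flips k Zs Es t)) powr (- s)))"
    unfolding sum_distrib_left by (intro sum_mono markov)
  also have "\<dots> = \<theta> powr s * (\<Sum>d\<le>k. of_nat (k choose d) * pattern_prob p k d * likelihood_ratio p k d powr (- s)) ^ m"
    unfolding w_def G_def p_def by (subst sum_noise_prod_net_flips[OF assms(5,6)]) simp
  also have "\<dots> = chernoff_sum p k \<gamma> s ^ m"
  proof -
    have "\<theta> powr s = (2 powr (\<gamma> * s)) ^ m"
      unfolding \<theta>_def by (simp add: powr_powr powr_realpow[symmetric] algebra_simps)
    moreover have "chernoff_sum p k \<gamma> s
        = 2 powr (\<gamma> * s) * (\<Sum>d\<le>k. of_nat (k choose d) * pattern_prob p k d * likelihood_ratio p k d powr (- s))"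
      unfolding chernoff_sum_def by (simp add: sum_distrib_left algebra_simps)
    ultimately show ?thesis by (simp add: power_mult_distrib)
  qed
  finally show ?thesis unfolding w_def G_def \<theta>_def .
qed

text \<open>The row of a wrong message \<open>w'\<close> in the codebook is independent of the row of \<open>w\<close>, so
  summing over it averages every factor over both values of the codeword bit.\<close>

lemma sum_codebook_noise_score:
  assumes "w < M" "w' < M" "w \<noteq> w'"
  shows "(\<Sum>C\<in>Pow (grid M m). noise_score p k m (\<lambda>t. (w', t) \<in> C) (\<lambda>t. (w, t) \<in> C) Zs Es)
       = 2 ^ (M * m - m) * (\<Prod>t<m. likelihood_ratio p k (card (net_flips k Zs Es t))
                              + likelihood_ratio p k (k - card (net_flips k Zs Es t)))"
proof -
  define R where "R = (\<lambda>t. (w', t)) ` {..<m}"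
  define d where "d t = card (net_flips k Zs Es t)" for t
  have inj: "inj (\<lambda>t::nat. (w', t))" by (auto simp: inj_on_def)
  have RG: "R \<subseteq> grid M m" unfolding R_def grid_def using assms by auto
  have split: "grid M m = (grid M m - R) \<union> R" using RG by auto
  have row: "(\<Sum>C'\<in>Pow R. noise_score p k m (\<lambda>t. (w', t) \<in> C \<union> C') (\<lambda>t. (w, t) \<in> C \<union> C') Zs Es)
      = (\<Prod>t<m. likelihood_ratio p k (d t) + likelihood_ratio p k (k - d t))" if "C \<subseteq> grid M m - R" for C
  proof -
    define g where "g t b = likelihood_ratio p k (if b = ((w, t) \<in> C) then d t else k - d t)" for t b
    have "noise_score p k m (\<lambda>t. (w', t) \<in> C \<union> C') (\<lambda>t. (w, t) \<in> C \<union> C') Zs Es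
        = (\<Prod>t<m. g t (t \<in> S))" if "C' = (\<lambda>t. (w', t)) ` S" for C' S
      unfolding noise_score_def g_def d_def
      by (intro prod.cong[OF refl]) (use \<open>C \<subseteq> grid M m - R\<close> that assms(3) in \<open>auto simp: R_def\<close>)
    then have "(\<Sum>C'\<in>Pow R. noise_score p k m (\<lambda>t. (w', t) \<in> C \<union> C') (\<lambda>t. (w, t) \<in> C \<union> C') Zs Es)
        = (\<Sum>S\<in>Pow {..<m}. \<Prod>t\<in>{..<m}. g t (t \<in> S))"
      unfolding R_def sum_Pow_image[OF inj] by simp
    also have "\<dots> = (\<Prod>t<m. g t True + g t False)" by (rule sum_Pow_prod_mem) simp
    also have "\<dots> = (\<Prod>t<m. likelihood_ratio p k (d t) + likelihood_ratio p k (k - d t))"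
      unfolding g_def by (intro prod.cong[OF refl]) auto
    finally show ?thesis .
  qed
  have "card (grid M m - R) = M * m - m"
    using RG inj unfolding R_def grid_def
    by (simp add: card_Diff_subset card_cartesian_product card_image inj_on_def)
  have "(\<Sum>C\<in>Pow (grid M m). noise_score p k m (\<lambda>t. (w', t) \<in> C) (\<lambda>t. (w, t) \<in> C) Zs Es)
      = (\<Sum>C\<in>Pow (grid M m - R). \<Sum>C'\<in>Pow R.
           noise_score p k m (\<lambda>t. (w', t) \<in> C \<union> C') (\<lambda>t. (w, t) \<in> C \<union> C') Zs Es)"
    by (subst split, rule sum_Pow_Un_disjoint) (auto simp: R_def grid_def)
  also have "\<dots> = (\<Sum>C\<in>Pow (grid M m - R). \<Prod>t<m. likelihood_ratio p k (d t) + likelihood_ratio p k (k - d t))"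
    by (intro sum.cong[OF refl] row) simp
  also have "\<dots> = 2 ^ (M * m - m) * (\<Prod>t<m. likelihood_ratio p k (d t) + likelihood_ratio p k (k - d t))"
    using \<open>card (grid M m - R) = M * m - m\<close> by (simp add: card_Pow)
  finally show ?thesis unfolding d_def .
qed

text \<open>Averaged over codebooks and noise, the score of a wrong codeword has expectation \<open>1\<close>.\<close>

lemma sum_codebook_noise_wrong_score:
  assumes "w < M" "w' < M" "w \<noteq> w'" "0 \<le> ps" "ps < 1/2" "0 \<le> pd" "pd < 1/2" "k \<le> K" "m < n"
  defines "p \<equiv> bsc_cascade ps pd"
  shows "(\<Sum>C\<in>Pow (grid M m). \<Sum>Zs\<in>Pow (grid K n). \<Sum>Es\<in>Pow (grid K n).
            bernoulli_weight ps (grid K n) Zs * bernoulli_weight pd (grid K n) Es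
            * noise_score p k m (\<lambda>t. (w', t) \<in> C) (\<lambda>t. (w, t) \<in> C) Zs Es)
       = 2 ^ (M * m)"
proof -
  define G where "G = grid K n"
  have p: "0 \<le> p" "p \<le> 1" using bsc_cascade_bounds[OF assms(4-7)] unfolding p_def by auto
  have "(\<Sum>C\<in>Pow (grid M m). \<Sum>Zs\<in>Pow G. \<Sum>Es\<in>Pow G. bernoulli_weight ps G Zs * bernoulli_weight pd G Es
            * noise_score p k m (\<lambda>t. (w', t) \<in> C) (\<lambda>t. (w, t) \<in> C) Zs Es)
      = (\<Sum>Zs\<in>Pow G. \<Sum>Es\<in>Pow G. \<Sum>C\<in>Pow (grid M m). bernoulli_weight ps G Zs * bernoulli_weight pd G Es
            * noise_score p k m (\<lambda>t. (w', t) \<in> C) (\<lambda>t. (w, t) \<in> C) Zs Es)"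
    by (subst sum.swap, intro sum.cong[OF refl] sum.swap)
  also have "\<dots> = 2 ^ (M * m - m) * (\<Sum>Zs\<in>Pow G. \<Sum>Es\<in>Pow G. bernoulli_weight ps G Zs * bernoulli_weight pd G Es
        * (\<Prod>t<m. (\<lambda>d. likelihood_ratio p k d + likelihood_ratio p k (k - d)) (card (net_flips k Zs Es t))))"
    by (simp only: sum_distrib_left)
      (intro sum.cong[OF refl], simp add: sum_distrib_left[symmetric] sum_codebook_noise_score[OF assms(1-3)] mult_ac)
  also have "\<dots> = 2 ^ (M * m - m) * (\<Sum>d\<le>k. of_nat (k choose d) * pattern_prob p k d
        * (likelihood_ratio p k d + likelihood_ratio p k (k - d))) ^ m"
    unfolding G_def p_def by (subst sum_noise_prod_net_flips[OF assms(8,9)]) (rule refl)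
  also have "\<dots> = 2 ^ (M * m - m) * 2 ^ m"
    by (simp only: sum_likelihood_ratio_complement[OF p])
  also have "\<dots> = 2 ^ (M * m)"
    using assms(1) by (simp add: power_add[symmetric] mult_eq_if)
  finally show ?thesis unfolding G_def .
qed

lemma error_given_message_le:
  fixes \<gamma> :: real
  assumes "0 \<le> ps" "ps < 1/2" "0 \<le> pd" "pd < 1/2" "k \<le> K" "m < n" "s > 0" "w < M"
  defines "p \<equiv> bsc_cascade ps pd" and "\<theta> \<equiv> 2 powr (\<gamma> * m)"
  shows "(\<Sum>Zs\<in>Pow (grid K n). \<Sum>Es\<in>Pow (grid K n). bernoulli_weight ps (grid K n) Zs
            * bernoulli_weight pd (grid K n) Es
            * (if threshold_decoder p k m \<theta> M C (received K n (\<lambda>w t. (w, t) \<in> C) fwd_relays w Zs Es) \<noteq> w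
               then 1 else 0))
     \<le> chernoff_sum p k \<gamma> s ^ m + (\<Sum>w'\<in>{..<M} - {w}. \<Sum>Zs\<in>Pow (grid K n). \<Sum>Es\<in>Pow (grid K n).
            bernoulli_weight ps (grid K n) Zs * bernoulli_weight pd (grid K n) Es
            * noise_score p k m (\<lambda>t. (w', t) \<in> C) (\<lambda>t. (w, t) \<in> C) Zs Es / \<theta>)"
proof -
  define G where "G = grid K n"
  define c where "c w' = (\<lambda>t. (w', t) \<in> C)" for w'
  define wt where "wt Zs Es = bernoulli_weight ps G Zs * bernoulli_weight pd G Es" for Zs Es
  define score where "score w' Zs Es = noise_score p k m (c w') (c w) Zs Es" for w' Zs Es
  have p: "0 \<le> p" "p \<le> 1" using bsc_cascade_bounds[OF assms(1-4)] unfolding p_def by auto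
  have wt: "0 \<le> wt Zs Es" for Zs Es unfolding wt_def using assms(1-4) by (simp add: bernoulli_weight_nonneg)
  have "(if threshold_decoder p k m \<theta> M C (received K n (\<lambda>w t. (w, t) \<in> C) fwd_relays w Zs Es) \<noteq> w then 1 else 0)
      \<le> (if score w Zs Es \<le> \<theta> then 1 else 0) + (\<Sum>w'\<in>{..<M} - {w}. score w' Zs Es / \<theta>)" for Zs Es
  proof -
    have "(\<Sum>w'\<in>{..<M} - {w}. if \<theta> < score w' Zs Es then 1 else 0) \<le> (\<Sum>w'\<in>{..<M} - {w}. score w' Zs Es / \<theta>)"
      using noise_score_nonneg[OF p] by (intro sum_mono) (auto simp: score_def \<theta>_def)
    moreover have "(if threshold_decoder p k m \<theta> M C (received K n (\<lambda>w t. (w, t) \<in> C) fwd_relays w Zs Es) \<noteq> w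
        then 1 else 0 :: real) \<le> (if score w Zs Es \<le> \<theta> then 1 else 0)
          + (\<Sum>w'\<in>{..<M} - {w}. if \<theta> < score w' Zs Es then 1 else 0)"
      using threshold_decoder_error_le[OF assms(8), of p k m \<theta> C "received K n (\<lambda>w t. (w, t) \<in> C) fwd_relays w Zs Es"]
      by (simp only: score_def c_def decoding_score_received_fwd[OF assms(5,6)])
    ultimately show ?thesis by linarith
  qed
  then have "(\<Sum>Zs\<in>Pow G. \<Sum>Es\<in>Pow G. wt Zs Es
            * (if threshold_decoder p k m \<theta> M C (received K n (\<lambda>w t. (w, t) \<in> C) fwd_relays w Zs Es) \<noteq> w
               then 1 else 0))
      \<le> (\<Sum>Zs\<in>Pow G. \<Sum>Es\<in>Pow G. wt Zs Es * (if score w Zs Es \<le> \<theta> then 1 else 0))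
        + (\<Sum>Zs\<in>Pow G. \<Sum>Es\<in>Pow G. \<Sum>w'\<in>{..<M} - {w}. wt Zs Es * score w' Zs Es / \<theta>)"
    unfolding sum.distrib[symmetric] sum_distrib_left[symmetric] times_divide_eq_right[symmetric]
      distrib_left[symmetric]
    by (intro sum_mono mult_left_mono wt)
  also have "(\<Sum>Zs\<in>Pow G. \<Sum>Es\<in>Pow G. wt Zs Es * (if score w Zs Es \<le> \<theta> then 1 else 0))
      \<le> chernoff_sum p k \<gamma> s ^ m"
    unfolding wt_def score_def G_def \<theta>_def p_def by (rule sum_noise_score_le_threshold[OF assms(1-7)])
  also have "(\<Sum>Zs\<in>Pow G. \<Sum>Es\<in>Pow G. \<Sum>w'\<in>{..<M} - {w}. wt Zs Es * score w' Zs Es / \<theta>)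
      = (\<Sum>w'\<in>{..<M} - {w}. \<Sum>Zs\<in>Pow G. \<Sum>Es\<in>Pow G. wt Zs Es * score w' Zs Es / \<theta>)"
    by (subst sum.swap, intro sum.cong[OF refl] sum.swap)
  finally show ?thesis unfolding wt_def score_def c_def G_def by simp
qed

lemma exists_le_average:
  fixes f :: "'a \<Rightarrow> real"
  assumes "finite A" "A \<noteq> {}" "(\<Sum>x\<in>A. f x) \<le> real (card A) * b"
  shows "\<exists>x\<in>A. f x \<le> b"
proof (rule ccontr)
  assume "\<not> (\<exists>x\<in>A. f x \<le> b)"
  then have "(\<Sum>x\<in>A. b) < (\<Sum>x\<in>A. f x)" using assms(1,2) by (intro sum_strict_mono) auto
  then show False using assms(3) by simp
qed

text \<open>Random coding: averaged over all codebooks, the error probability is at most the bound.\<close>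

lemma exists_good_codebook:
  fixes \<gamma> :: real
  assumes "0 \<le> ps" "ps < 1/2" "0 \<le> pd" "pd < 1/2" "k \<le> K" "m < n" "s > 0" "M \<ge> 1"
  defines "p \<equiv> bsc_cascade ps pd" and "\<theta> \<equiv> 2 powr (\<gamma> * m)"
  shows "\<exists>C. avg_error K (\<lambda>_. ps) (\<lambda>_. pd) n M (\<lambda>w t. (w, t) \<in> C) fwd_relays (threshold_decoder p k m \<theta> M C)
            \<le> chernoff_sum p k \<gamma> s ^ m + (real M - 1) / \<theta>"
proof -
  define G where "G = grid K n"
  define P where "P = chernoff_sum p k \<gamma> s ^ m"
  define B where "B w C = (\<Sum>w'\<in>{..<M} - {w}. \<Sum>Zs\<in>Pow G. \<Sum>Es\<in>Pow G.
      bernoulli_weight ps G Zs * bernoulli_weight pd G Es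
      * noise_score p k m (\<lambda>t. (w', t) \<in> C) (\<lambda>t. (w, t) \<in> C) Zs Es / \<theta>)" for w C
  define E where "E C = avg_error K (\<lambda>_. ps) (\<lambda>_. pd) n M (\<lambda>w t. (w, t) \<in> C) fwd_relays
      (threshold_decoder p k m \<theta> M C)" for C
  have M: "real M > 0" using assms(8) by simp
  have \<theta>: "\<theta> > 0" unfolding \<theta>_def by simp
  have "E C \<le> (1 / real M) * (\<Sum>w<M. P + B w C)" for C
    unfolding E_def avg_error_def noise_weight_const P_def B_def G_def p_def \<theta>_def
    by (intro mult_left_mono sum_mono error_given_message_le[OF assms(1-7)]) auto
  then have E: "E C \<le> P + (1 / real M) * (\<Sum>w<M. B w C)" for C
    using M by (simp add: sum.distrib field_simps)
  have B: "(\<Sum>C\<in>Pow (grid M m). B w C) = (real M - 1) * 2 ^ (M * m) / \<theta>" if "w < M" for w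
  proof -
    have "(\<Sum>C\<in>Pow (grid M m). B w C) = (\<Sum>w'\<in>{..<M} - {w}. (\<Sum>C\<in>Pow (grid M m). \<Sum>Zs\<in>Pow G. \<Sum>Es\<in>Pow G.
        bernoulli_weight ps G Zs * bernoulli_weight pd G Es
        * noise_score p k m (\<lambda>t. (w', t) \<in> C) (\<lambda>t. (w, t) \<in> C) Zs Es) / \<theta>)"
      unfolding B_def by (subst sum.swap) (simp only: sum_divide_distrib)
    also have "\<dots> = (\<Sum>w'\<in>{..<M} - {w}. 2 ^ (M * m) / \<theta>)"
      unfolding G_def p_def using that
      by (intro sum.cong[OF refl]) (subst sum_codebook_noise_wrong_score[OF _ _ _ assms(1-6)], auto)
    finally show ?thesis using that by (simp add: of_nat_diff)
  qed
  have card: "real (card (Pow (grid M m))) = 2 ^ (M * m)"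
    by (simp add: card_Pow grid_def card_cartesian_product)
  have "(\<Sum>C\<in>Pow (grid M m). E C) \<le> (\<Sum>C\<in>Pow (grid M m). P + (1 / real M) * (\<Sum>w<M. B w C))"
    by (intro sum_mono E)
  also have "\<dots> = real (card (Pow (grid M m))) * P + (1 / real M) * (\<Sum>w<M. \<Sum>C\<in>Pow (grid M m). B w C)"
    by (simp add: sum.distrib sum_divide_distrib[symmetric] sum.swap[of _ "Pow (grid M m)"])
  also have "\<dots> = real (card (Pow (grid M m))) * (P + (real M - 1) / \<theta>)"
    using M \<theta> by (simp add: B card field_simps)
  finally obtain C where "E C \<le> P + (real M - 1) / \<theta>"
    using exists_le_average[of "Pow (grid M m)" E] by (auto simp: grid_def)
  then show ?thesis unfolding E_def P_def by blast
qed

lemma fwd_achievable_below_repetition_info: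
  assumes "0 \<le> ps" "ps < 1/2" "0 \<le> pd" "pd < 1/2" "k \<le> K"
    and "R < repetition_info (bsc_cascade ps pd) k"
  shows "fwd_achievable K (\<lambda>_. ps) (\<lambda>_. pd) R"
  unfolding fwd_achievable_def
proof (intro allI impI)
  fix \<epsilon> :: real assume "\<epsilon> > 0"
  define p where "p = bsc_cascade ps pd"
  have p: "0 \<le> p" "p \<le> 1" using bsc_cascade_bounds[OF assms(1-4)] unfolding p_def by auto
  define \<gamma> where "\<gamma> = (R + repetition_info p k) / 2"
  have \<gamma>: "R < \<gamma>" "\<gamma> < repetition_info p k" using assms(6) unfolding \<gamma>_def p_def by auto
  obtain s where s: "s > 0" "chernoff_sum p k \<gamma> s < 1" using exists_chernoff_sum_less_one[OF p \<gamma>(2)] by blast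
  define \<Psi> where "\<Psi> = chernoff_sum p k \<gamma> s"
  define r where "r = 2 powr (R - \<gamma>)"
  have "0 \<le> \<Psi>" "\<Psi> < 1" using chernoff_sum_nonneg[OF p] s unfolding \<Psi>_def by auto
  then have "(\<lambda>m. \<Psi> ^ m) \<longlonglongrightarrow> 0" by (intro LIMSEQ_power_zero) auto
  then obtain N1 where N1: "\<And>m. m \<ge> N1 \<Longrightarrow> \<Psi> ^ m < \<epsilon> / 2"
    using order_tendstoD(2)[of _ 0 sequentially "\<epsilon> / 2"] \<open>\<epsilon> > 0\<close> by (auto simp: eventually_sequentially)
  have "0 \<le> r" "r < 1" unfolding r_def using \<gamma>(1) by (auto intro: powr_less_one)
  then have "(\<lambda>n. r ^ n) \<longlonglongrightarrow> 0" by (intro LIMSEQ_power_zero) auto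
  then obtain N2 where N2: "\<And>n. n \<ge> N2 \<Longrightarrow> r ^ n < \<epsilon> / 2 / 2 powr \<gamma>"
    using order_tendstoD(2)[of _ 0 sequentially "\<epsilon> / 2 / 2 powr \<gamma>"] \<open>\<epsilon> > 0\<close>
    by (auto simp: eventually_sequentially)
  show "\<exists>N. \<forall>n\<ge>N. \<exists>enc dec. avg_error K (\<lambda>_. ps) (\<lambda>_. pd) n (num_msgs n R) enc fwd_relays dec \<le> \<epsilon>"
  proof (intro exI[of _ "Suc (N1 + N2)"] allI impI)
    fix n assume n: "Suc (N1 + N2) \<le> n"
    define m where "m = n - 1"
    define M where "M = num_msgs n R"
    define \<theta> where "\<theta> = 2 powr (\<gamma> * m)"
    have m: "m < n" "real m = real n - 1" using n unfolding m_def by auto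
    obtain C where C: "avg_error K (\<lambda>_. ps) (\<lambda>_. pd) n M (\<lambda>w t. (w, t) \<in> C) fwd_relays
        (threshold_decoder p k m \<theta> M C) \<le> \<Psi> ^ m + (real M - 1) / \<theta>"
      using exists_good_codebook[OF assms(1-5) m(1) s(1) num_msgs_bounds(3)] unfolding M_def \<Psi>_def p_def \<theta>_def
      by blast
    have "(real M - 1) / \<theta> \<le> 2 powr (real n * R) / \<theta>"
      unfolding \<theta>_def M_def using num_msgs_bounds(2)[of n R] by (intro divide_right_mono) auto
    also have "\<dots> = 2 powr \<gamma> * r ^ n"
      unfolding \<theta>_def r_def m(2)
      by (simp add: powr_diff[symmetric] powr_add[symmetric] powr_realpow[symmetric] powr_powr algebra_simps)
    also have "\<dots> < \<epsilon> / 2" using N2[of n] n by (simp add: field_simps)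
    finally have "(real M - 1) / \<theta> < \<epsilon> / 2" .
    moreover have "\<Psi> ^ m < \<epsilon> / 2" using N1 n unfolding m_def by auto
    ultimately show "\<exists>enc dec. avg_error K (\<lambda>_. ps) (\<lambda>_. pd) n (num_msgs n R) enc fwd_relays dec \<le> \<epsilon>"
      using C unfolding M_def
      by (intro exI[of _ "\<lambda>w t. (w, t) \<in> C"] exI[of _ "threshold_decoder p k m \<theta> (num_msgs n R) C"]) linarith
  qed
qed

theorem corollary5:
  fixes ps pd \<zeta> :: real and K :: nat
  assumes "0 \<le> ps" and "ps < 1/2" and "0 \<le> pd" and "pd < 1/2" and "\<zeta> > 0"
    and "K > K_thr (ps * (1 - pd) + (1 - ps) * pd) \<zeta>"
  shows "\<exists>R. R \<ge> capacity K (\<lambda>_. ps) (\<lambda>_. pd) - \<zeta> \<and>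
              (\<forall>R'<R. fwd_achievable K (\<lambda>_. ps) (\<lambda>_. pd) R')"
proof (intro exI[of _ "1 - \<zeta>"] conjI allI impI)
  show "capacity K (\<lambda>_. ps) (\<lambda>_. pd) - \<zeta> \<le> 1 - \<zeta>"
    using capacity_le_one[of "\<lambda>_. ps" "\<lambda>_. pd" K] assms(1-4) by simp
  define p where "p = bsc_cascade ps pd"
  have p: "0 \<le> p" "p < 1/2" using bsc_cascade_bounds[OF assms(1-4)] unfolding p_def by auto
  have "K_thr p \<zeta> \<le> K" using assms(6) unfolding p_def bsc_cascade_def by simp
  moreover fix R' assume "R' < 1 - \<zeta>"
  ultimately show "fwd_achievable K (\<lambda>_. ps) (\<lambda>_. pd) R'"
    using fwd_achievable_below_repetition_info[OF assms(1-4)] repetition_info_K_thr_ge[OF p assms(5)]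
    unfolding p_def by simp
qed

end
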